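(* Let $\gamma:\mathbb{R}\to{\rm AdS}$ be a null curve (standing assumptions) with constant bending $\kappa<-1$. Then $\gamma$ is closed (periodic) if and only if $\frac{\rho_+}{\rho_-}\in\mathbb{Q}$, where $\rho_\pm=2\pi/\sqrt{|\kappa\pm1|}$; equivalently, if and only if $\kappa=-\dfrac{m^2+n^2}{m^2-n^2}$ for some relatively prime natural numbers $m>n$.
   Context: ${\rm AdS}={\rm SL}(2,\mathbb{R})$ with the Lorentzian metric induced by the polarization $\langle\cdot,\cdot\rangle$ of $q(X)=-\det X$ on real $2\times2$ matrices. Null curves ($\langle\gamma',\gamma'\rangle=0$) are assumed future-directed, without inflection points ($\gamma'\wedge\gamma''\neq0$), and parametrized by proper time ($\langle\gamma'',\gamma''\rangle=4$). The bending is $\kappa=-\frac1{16}\langle\gamma''',\gamma'''\rangle$. Such a curve admits a spinor frame field $(F_+,F_-)$ with values in ${\rm SL}(2,\mathbb{R})^2$, $\gamma=F_+F_-^{-1}$, satisfying $F_\pm'=F_\pm\begin{pmatrix}0&\kappa\pm1\\1&0\end{pmatrix}$. *)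

theory Defs
  imports "HOL-Analysis.Analysis"
begin

text \<open>AdS = SL(2,R) inside the space of real 2x2 matrices, with the quadratic
form q(X) = - det X and its polarization.\<close>

definition adsq :: "real^2^2 \<Rightarrow> real" where
  "adsq X = - det X"

definition adsinner :: "real^2^2 \<Rightarrow> real^2^2 \<Rightarrow> real" where
  "adsinner X Y = (adsq (X + Y) - adsq X - adsq Y) / 2"

definition in_AdS :: "real^2^2 \<Rightarrow> bool" where
  "in_AdS X \<longleftrightarrow> det X = 1"

text \<open>Time orientation: the timelike left-invariant field X * T0 with
T0 = [[0,1],[-1,0]] is declared future-directed; a causal vector V at X is
future-directed iff adsinner V (X * T0) < 0.\<close>

definition T0 :: "real^2^2" where
  "T0 = (\<chi> i j. if i = 1 \<and> j = 2 then 1 else if i = 2 \<and> j = 1 then -1 else 0)"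

definition future_directed :: "real^2^2 \<Rightarrow> real^2^2 \<Rightarrow> bool" where
  "future_directed X V \<longleftrightarrow> adsinner V (X ** T0) < 0"

text \<open>Standing assumptions: null, future-directed, no inflection points
(gamma' and gamma'' linearly independent, i.e. gamma' wedge gamma'' nonzero),
parametrized by proper time.\<close>

definition null_curve :: "(real \<Rightarrow> real^2^2) \<Rightarrow> (nat \<Rightarrow> real \<Rightarrow> real^2^2) \<Rightarrow> bool" where
  "null_curve \<gamma> D \<longleftrightarrow>
     D 0 = \<gamma> \<and>
     (\<forall>k t. (D k has_vector_derivative D (Suc k) t) (at t)) \<and>
     (\<forall>t. in_AdS (\<gamma> t)) \<and>
     (\<forall>t. adsinner (D 1 t) (D 1 t) = 0) \<and>
     (\<forall>t. future_directed (\<gamma> t) (D 1 t)) \<and>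
     (\<forall>t. \<forall>a b. a *\<^sub>R D 1 t + b *\<^sub>R D 2 t = 0 \<longrightarrow> a = 0 \<and> b = 0) \<and>
     (\<forall>t. adsinner (D 2 t) (D 2 t) = 4)"

definition bending :: "(nat \<Rightarrow> real \<Rightarrow> real^2^2) \<Rightarrow> real \<Rightarrow> real" where
  "bending D t = - (1/16) * adsinner (D 3 t) (D 3 t)"

definition closed_curve :: "(real \<Rightarrow> 'a) \<Rightarrow> bool" where
  "closed_curve \<gamma> \<longleftrightarrow> (\<exists>T>0. \<forall>t. \<gamma> (t + T) = \<gamma> t)"

definition rho_plus :: "real \<Rightarrow> real" where
  "rho_plus \<kappa> = 2 * pi / sqrt \<bar>\<kappa> + 1\<bar>"

definition rho_minus :: "real \<Rightarrow> real" where
  "rho_minus \<kappa> = 2 * pi / sqrt \<bar>\<kappa> - 1\<bar>"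

end

theory Submission
  imports Defs
begin

text \<open>Differentiating the Gram relations of the frame
\<open>(\<gamma>, \<gamma>', \<gamma>'', \<gamma>''')\<close>, which is a basis, shows that a null curve of
constant bending satisfies the linear equation \<open>\<gamma>'''' = 4\<kappa> \<gamma>'' - 4 \<gamma>\<close>.
For \<open>\<kappa> < -1\<close> its characteristic roots are \<open>\<plusminus>i\<alpha>, \<plusminus>i\<beta>\<close> with
\<open>\<alpha> = a + b\<close>, \<open>\<beta> = a - b\<close>, \<open>a = \<surd>(1 - \<kappa>)\<close>, \<open>b = \<surd>(-1 - \<kappa>)\<close>:
\<open>\<gamma>'' + \<beta>\<^sup>2 \<gamma>\<close> oscillates with frequency \<open>\<alpha>\<close>, \<open>\<gamma>'' + \<alpha>\<^sup>2 \<gamma>\<close> with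
frequency \<open>\<beta>\<close>, and \<open>\<gamma>\<close> is proportional to their difference. Pairing
with \<open>\<gamma>(0)\<close> shows that a period \<open>T\<close> of \<open>\<gamma>\<close> makes both \<open>\<alpha>T\<close> and
\<open>\<beta>T\<close> multiples of \<open>2\<pi>\<close>; conversely such a \<open>T\<close> is a period. So
\<open>\<gamma>\<close> is closed iff \<open>\<alpha>/\<beta>\<close> is rational, iff \<open>a/b = \<rho>\<^sub>+/\<rho>\<^sub>-\<close> is
rational, and writing \<open>a/b = m/n\<close> in lowest terms gives the formula for \<open>\<kappa>\<close>.\<close>

lemma adsinner_coord:
  "adsinner X Y = - (X$1$1 * Y$2$2 + Y$1$1 * X$2$2 - X$1$2 * Y$2$1 - Y$1$2 * X$2$1) / 2"
  by (simp add: adsinner_def adsq_def det_2 algebra_simps)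

lemma adsinner_commute: "adsinner X Y = adsinner Y X"
  by (simp add: adsinner_coord algebra_simps)

lemma adsinner_self: "adsinner X X = - det X"
  by (simp add: adsinner_coord det_2)

lemma bounded_bilinear_adsinner: "bounded_bilinear adsinner"
proof -
  have "bilinear adsinner"
    unfolding bilinear_def
    by (auto intro!: linearI simp: adsinner_coord diff_divide_distrib add_divide_distrib algebra_simps)
  then show ?thesis
    by (simp add: bilinear_conv_bounded_bilinear)
qed

lemmas adsinner_distrib =
  bounded_bilinear.add_left[OF bounded_bilinear_adsinner]
  bounded_bilinear.add_right[OF bounded_bilinear_adsinner]
  bounded_bilinear.diff_left[OF bounded_bilinear_adsinner]
  bounded_bilinear.diff_right[OF bounded_bilinear_adsinner]
  bounded_bilinear.scaleR_left[OF bounded_bilinear_adsinner]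
  bounded_bilinear.scaleR_right[OF bounded_bilinear_adsinner]
  bounded_bilinear.zero_left[OF bounded_bilinear_adsinner]

lemma adsinner_nondegenerate:
  assumes "\<And>X. adsinner R X = 0"
  shows "R = 0"
proof -
  define E :: "2 \<Rightarrow> 2 \<Rightarrow> real^2^2" where "E k l = (\<chi> i j. if i = k \<and> j = l then 1 else 0)" for k l
  have "R$1$1 = 0" "R$2$2 = 0" "R$1$2 = 0" "R$2$1 = 0"
    using assms[of "E 2 2"] assms[of "E 1 1"] assms[of "E 2 1"] assms[of "E 1 2"]
    by (simp_all add: adsinner_coord E_def)
  then show ?thesis
    by (simp add: vec_eq_iff forall_2)
qed

text \<open>The Gram matrix of the frame below is invertible, so the four vectors
are independent, hence a basis of the four-dimensional space of matrices.\<close>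

lemma eq_0_if_orthogonal_to_frame:
  fixes v0 v1 v2 v3 R :: "real^2^2"
  assumes gram: "adsinner v0 v0 = -1" "adsinner v0 v1 = 0" "adsinner v0 v2 = 0" "adsinner v0 v3 = 0"
      "adsinner v1 v1 = 0" "adsinner v1 v2 = 0" "adsinner v1 v3 = -4" "adsinner v2 v2 = 4"
      "adsinner v2 v3 = 0" "adsinner v3 v3 = c"
    and orth: "adsinner R v0 = 0" "adsinner R v1 = 0" "adsinner R v2 = 0" "adsinner R v3 = 0"
  shows "R = 0"
proof -
  have gram': "adsinner v1 v0 = 0" "adsinner v2 v0 = 0" "adsinner v3 v0 = 0" "adsinner v2 v1 = 0"
      "adsinner v3 v1 = -4" "adsinner v3 v2 = 0"
    using gram by (simp_all add: adsinner_commute)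
  have distinct: "v0 \<noteq> v1" "v0 \<noteq> v2" "v0 \<noteq> v3" "v1 \<noteq> v2" "v1 \<noteq> v3" "v2 \<noteq> v3"
    using gram gram' by auto
  define B where "B = {v0, v1, v2, v3}"
  have "independent B"
  proof -
    have "\<forall>v\<in>B. u v = 0" if "(\<Sum>v\<in>B. u v *\<^sub>R v) = 0" for u
    proof -
      have "u v0 *\<^sub>R v0 + (u v1 *\<^sub>R v1 + (u v2 *\<^sub>R v2 + u v3 *\<^sub>R v3)) = 0"
        using that distinct by (simp add: B_def)
      then have "adsinner (u v0 *\<^sub>R v0 + (u v1 *\<^sub>R v1 + (u v2 *\<^sub>R v2 + u v3 *\<^sub>R v3))) w = 0" for w
        by (simp add: adsinner_distrib)
      from this[of v0] this[of v1] this[of v2] this[of v3] gram gram'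
      show ?thesis
        by (simp add: adsinner_distrib B_def)
    qed
    then show ?thesis
      using dependent_finite[of B] by (auto simp: B_def)
  qed
  moreover have "card B = 4"
    using distinct by (simp add: B_def)
  ultimately have "UNIV \<subseteq> span B"
    using card_eq_dim[of B UNIV] by (simp add: B_def)
  moreover have "linear (adsinner R)"
    using bounded_bilinear.bounded_linear_right[OF bounded_bilinear_adsinner] bounded_linear.linear
    by blast
  ultimately have "adsinner R X = 0" for X
    using linear_eq_0_on_span[of "adsinner R" B X] orth by (auto simp: B_def)
  then show ?thesis
    by (rule adsinner_nondegenerate)
qed

lemmas has_vector_derivative_scaleR_right =
  bounded_linear.has_vector_derivative[OF bounded_linear_scaleR_right]

lemma has_vector_derivative_harmonic:
  fixes a b :: "'a::real_normed_vector"
  shows "((\<lambda>t. cos (w*t) *\<^sub>R a + sin (w*t) *\<^sub>R b) has_vector_derivative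
     (w * cos (w*t)) *\<^sub>R b - (w * sin (w*t)) *\<^sub>R a) (at t)"
  by (rule has_vector_derivative_eq_rhs, (rule derivative_intros)+) (auto simp: algebra_simps)

text \<open>Uniqueness comes from the conserved energy
\<open>|z'|\<^sup>2 + w\<^sup>2 |z|\<^sup>2\<close> of the difference \<open>z\<close> to the explicit solution.\<close>

lemma harmonic_oscillator_solution:
  fixes y y' y'' :: "real \<Rightarrow> 'a::real_inner"
  assumes y: "\<And>t. (y has_vector_derivative y' t) (at t)"
    and y': "\<And>t. (y' has_vector_derivative y'' t) (at t)"
    and eq: "\<And>t. y'' t = - (w\<^sup>2) *\<^sub>R y t"
    and w: "w \<noteq> 0"
  shows "y t = cos (w*t) *\<^sub>R y 0 + (sin (w*t) / w) *\<^sub>R y' 0"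
proof -
  define c where "c = (1 / w) *\<^sub>R y' 0"
  define z where "z t = y t - (cos (w*t) *\<^sub>R y 0 + sin (w*t) *\<^sub>R c)" for t
  define z' where "z' t = y' t - ((w * cos (w*t)) *\<^sub>R c - (w * sin (w*t)) *\<^sub>R y 0)" for t
  have z: "(z has_vector_derivative z' t) (at t)" for t
    unfolding z_def[abs_def] z'_def
    by (intro has_vector_derivative_diff y has_vector_derivative_harmonic)
  have z': "(z' has_vector_derivative - (w\<^sup>2) *\<^sub>R z t) (at t)" for t
    unfolding z'_def[abs_def]
    by (rule has_vector_derivative_eq_rhs, (rule derivative_intros y')+)
      (simp add: eq z_def algebra_simps power2_eq_square)
  define E where "E t = inner (z' t) (z' t) + w\<^sup>2 * inner (z t) (z t)" for t
  have "(E has_real_derivative 0) (at t)" for t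
  proof -
    have "(E has_vector_derivative inner (z' t) (- (w\<^sup>2) *\<^sub>R z t) + inner (- (w\<^sup>2) *\<^sub>R z t) (z' t)
        + w\<^sup>2 * (inner (z t) (z' t) + inner (z' t) (z t))) (at t)"
      unfolding E_def[abs_def]
      by (intro has_vector_derivative_add has_vector_derivative_mult_right
          bounded_bilinear.has_vector_derivative[OF bounded_bilinear_inner] z z')
    then show ?thesis
      by (simp add: has_real_derivative_iff_has_vector_derivative inner_commute algebra_simps)
  qed
  then have "E t = E 0"
    using DERIV_isconst_all by blast
  also have "E 0 = 0"
    using w by (simp add: E_def z_def z'_def c_def)
  finally have "inner (z' t) (z' t) + w\<^sup>2 * inner (z t) (z t) = 0"
    by (simp add: E_def)
  moreover have "0 \<le> inner (z' t) (z' t)" "0 \<le> w\<^sup>2 * inner (z t) (z t)"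
    by simp_all
  ultimately have "w\<^sup>2 * inner (z t) (z t) = 0"
    by linarith
  then have "z t = 0"
    using w by simp
  then show ?thesis
    by (simp add: z_def c_def)
qed

definition derivative_chain :: "(nat \<Rightarrow> real \<Rightarrow> 'a::real_normed_vector) \<Rightarrow> bool" where
  "derivative_chain y \<longleftrightarrow> (\<forall>k t. (y k has_vector_derivative y (Suc k) t) (at t))"

lemma derivative_chainD:
  "derivative_chain y \<Longrightarrow> (y k has_vector_derivative y (Suc k) t) (at t)"
  by (simp add: derivative_chain_def)

lemma has_vector_derivative_periodic:
  fixes f :: "real \<Rightarrow> 'a::real_normed_vector"
  assumes periodic: "\<And>t. f (t + T) = f t" and f: "\<And>t. (f has_vector_derivative f' t) (at t)"
  shows "f' (t + T) = f' t"
proof -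
  have "((\<lambda>s. s + T) has_vector_derivative 1) (at t)"
    using has_vector_derivative_add[OF has_vector_derivative_id has_vector_derivative_const] by simp
  then have "((f \<circ> (\<lambda>s. s + T)) has_vector_derivative 1 *\<^sub>R f' (t + T)) (at t)"
    by (rule vector_diff_chain_at) (rule f)
  moreover have "f \<circ> (\<lambda>s. s + T) = f"
    using periodic by (auto simp: o_def)
  ultimately have "(f has_vector_derivative f' (t + T)) (at t)"
    by simp
  then show ?thesis
    using f vector_derivative_unique_at by blast
qed

lemma derivative_chain_periodic:
  assumes "derivative_chain y" and "\<And>t. y 0 (t + T) = y 0 t"
  shows "y k (t + T) = y k t"
proof (induction k arbitrary: t)
  case (Suc k)
  show ?case
    by (rule has_vector_derivative_periodic[where f = "y k"])
      (use Suc derivative_chainD[OF assms(1)] in auto)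
qed (use assms(2) in simp)

text \<open>The equation \<open>y'''' = -(\<alpha>\<^sup>2 + \<beta>\<^sup>2) y'' - \<alpha>\<^sup>2\<beta>\<^sup>2 y\<close> factors as
\<open>(\<partial>\<^sup>2 + \<alpha>\<^sup>2)(\<partial>\<^sup>2 + \<beta>\<^sup>2) y = 0\<close>.\<close>

lemma fourth_order_oscillator_component:
  fixes y :: "nat \<Rightarrow> real \<Rightarrow> 'a::real_inner"
  assumes chain: "derivative_chain y"
    and eq: "\<And>t. y 4 t = - (\<alpha>\<^sup>2 + \<beta>\<^sup>2) *\<^sub>R y 2 t - (\<alpha>\<^sup>2 * \<beta>\<^sup>2) *\<^sub>R y 0 t"
    and "\<beta> \<noteq> 0"
  shows "y 2 t + \<alpha>\<^sup>2 *\<^sub>R y 0 t =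
    cos (\<beta>*t) *\<^sub>R (y 2 0 + \<alpha>\<^sup>2 *\<^sub>R y 0 0) + (sin (\<beta>*t) / \<beta>) *\<^sub>R (y 3 0 + \<alpha>\<^sup>2 *\<^sub>R y 1 0)"
proof (rule harmonic_oscillator_solution[where w = \<beta>])
  have d: "(y k has_vector_derivative y k' t) (at t)" if "k' = Suc k" for k k' t
    using derivative_chainD[OF chain] that by simp
  show "((\<lambda>t. y 2 t + \<alpha>\<^sup>2 *\<^sub>R y 0 t) has_vector_derivative y 3 t + \<alpha>\<^sup>2 *\<^sub>R y 1 t) (at t)" for t
    by (intro has_vector_derivative_add has_vector_derivative_scaleR_right d) simp_all
  show "((\<lambda>t. y 3 t + \<alpha>\<^sup>2 *\<^sub>R y 1 t) has_vector_derivative y 4 t + \<alpha>\<^sup>2 *\<^sub>R y 2 t) (at t)" for t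
    by (intro has_vector_derivative_add has_vector_derivative_scaleR_right d) simp_all
  show "y 4 t + \<alpha>\<^sup>2 *\<^sub>R y 2 t = - (\<beta>\<^sup>2) *\<^sub>R (y 2 t + \<alpha>\<^sup>2 *\<^sub>R y 0 t)" for t
    by (simp add: eq algebra_simps)
qed fact

lemma harmonic_shift:
  assumes "w * T = 2 * pi * of_int k"
  shows "cos (w * (t + T)) *\<^sub>R a + (sin (w * (t + T)) / w) *\<^sub>R b =
    cos (w * t) *\<^sub>R a + (sin (w * t) / w) *\<^sub>R b"
  using assms by (simp add: distrib_left cos_add sin_add)

lemma fourth_order_oscillator_periodic:
  fixes y :: "nat \<Rightarrow> real \<Rightarrow> 'a::real_inner"
  assumes chain: "derivative_chain y"
    and eq: "\<And>t. y 4 t = - (\<alpha>\<^sup>2 + \<beta>\<^sup>2) *\<^sub>R y 2 t - (\<alpha>\<^sup>2 * \<beta>\<^sup>2) *\<^sub>R y 0 t"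
    and \<alpha>: "\<alpha> > 0" and \<beta>: "\<beta> > 0" and "\<alpha> \<noteq> \<beta>"
    and "\<alpha> / \<beta> \<in> \<rat>"
  shows "\<exists>T>0. \<forall>t. y 0 (t + T) = y 0 t"
proof -
  have "\<alpha> \<noteq> 0" "\<beta> \<noteq> 0"
    using \<alpha> \<beta> by auto
  obtain n m :: int where m: "m > 0" and nm: "\<alpha> / \<beta> = of_int n / of_int m"
    using \<open>\<alpha> / \<beta> \<in> \<rat>\<close> by (auto elim!: Rats_cases')
  define T where "T = 2 * pi * of_int m / \<beta>"
  have "\<alpha> * T = 2 * pi * of_int m * (\<alpha> / \<beta>)"
    by (simp add: T_def)
  also have "\<dots> = 2 * pi * of_int n"
    using m nm by simp
  finally have "\<alpha> * T = 2 * pi * of_int n" .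
  have "\<beta> * T = 2 * pi * of_int m"
    using \<beta> by (simp add: T_def)
  have eq': "y 4 t = - (\<beta>\<^sup>2 + \<alpha>\<^sup>2) *\<^sub>R y 2 t - (\<beta>\<^sup>2 * \<alpha>\<^sup>2) *\<^sub>R y 0 t" for t
    by (simp add: eq add.commute mult.commute)
  have component_\<alpha>: "y 2 (t + T) + \<beta>\<^sup>2 *\<^sub>R y 0 (t + T) = y 2 t + \<beta>\<^sup>2 *\<^sub>R y 0 t" for t
    unfolding fourth_order_oscillator_component[OF chain eq' \<open>\<alpha> \<noteq> 0\<close>, of "t + T"]
      fourth_order_oscillator_component[OF chain eq' \<open>\<alpha> \<noteq> 0\<close>, of t]
    by (rule harmonic_shift[OF \<open>\<alpha> * T = 2 * pi * of_int n\<close>])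
  have component_\<beta>: "y 2 (t + T) + \<alpha>\<^sup>2 *\<^sub>R y 0 (t + T) = y 2 t + \<alpha>\<^sup>2 *\<^sub>R y 0 t" for t
    unfolding fourth_order_oscillator_component[OF chain eq \<open>\<beta> \<noteq> 0\<close>, of "t + T"]
      fourth_order_oscillator_component[OF chain eq \<open>\<beta> \<noteq> 0\<close>, of t]
    by (rule harmonic_shift[OF \<open>\<beta> * T = 2 * pi * of_int m\<close>])
  have difference: "(\<alpha>\<^sup>2 - \<beta>\<^sup>2) *\<^sub>R y 0 s = (y 2 s + \<alpha>\<^sup>2 *\<^sub>R y 0 s) - (y 2 s + \<beta>\<^sup>2 *\<^sub>R y 0 s)" for s
    by (simp add: algebra_simps)
  have "(\<alpha>\<^sup>2 - \<beta>\<^sup>2) *\<^sub>R y 0 (t + T) = (\<alpha>\<^sup>2 - \<beta>\<^sup>2) *\<^sub>R y 0 t" for t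
    by (simp only: difference component_\<alpha> component_\<beta>)
  moreover have "\<alpha>\<^sup>2 \<noteq> \<beta>\<^sup>2"
    using \<alpha> \<beta> \<open>\<alpha> \<noteq> \<beta>\<close> by (simp add: power2_eq_iff_nonneg)
  ultimately have "y 0 (t + T) = y 0 t" for t
    by simp
  moreover have "T > 0"
    using \<beta> m by (simp add: T_def)
  ultimately show ?thesis
    by blast
qed

locale null_curve_const_bending =
  fixes D :: "nat \<Rightarrow> real \<Rightarrow> real^2^2" and \<kappa> :: real
  assumes chain: "derivative_chain D"
    and det_1: "\<And>t. det (D 0 t) = 1"
    and null: "\<And>t. adsinner (D 1 t) (D 1 t) = 0"
    and proper_time: "\<And>t. adsinner (D 2 t) (D 2 t) = 4"
    and const_bending: "\<And>t. adsinner (D 3 t) (D 3 t) = -16 * \<kappa>"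
begin

lemma adsinner_derivative_eq_0_if_const:
  assumes "\<And>t. adsinner (D i t) (D j t) = c"
  shows "adsinner (D i t) (D (Suc j) t) + adsinner (D (Suc i) t) (D j t) = 0"
proof -
  have "((\<lambda>t. adsinner (D i t) (D j t)) has_real_derivative
      adsinner (D i t) (D (Suc j) t) + adsinner (D (Suc i) t) (D j t)) (at t)"
    using bounded_bilinear.has_vector_derivative[OF bounded_bilinear_adsinner
        derivative_chainD[OF chain] derivative_chainD[OF chain]]
    by (simp add: has_real_derivative_iff_has_vector_derivative)
  moreover have "(\<lambda>t. adsinner (D i t) (D j t)) = (\<lambda>_. c)"
    using assms by auto
  ultimately show ?thesis
    using DERIV_const DERIV_unique by metis
qed

lemma gram_00: "adsinner (D 0 t) (D 0 t) = -1"
  by (simp add: adsinner_self det_1)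

lemma gram_01: "adsinner (D 0 t) (D 1 t) = 0"
  using adsinner_derivative_eq_0_if_const[of 0 0, OF gram_00, of t] adsinner_commute[of "D 1 t" "D 0 t"]
  by simp

lemma gram_02: "adsinner (D 0 t) (D 2 t) = 0"
  using adsinner_derivative_eq_0_if_const[of 0 1, OF gram_01, of t] null[of t]
  by (simp add: numeral_eq_Suc)

lemma gram_12: "adsinner (D 1 t) (D 2 t) = 0"
  using adsinner_derivative_eq_0_if_const[of 1 1, OF null, of t] adsinner_commute[of "D 2 t" "D 1 t"]
  by (simp add: numeral_eq_Suc)

lemma gram_03: "adsinner (D 0 t) (D 3 t) = 0"
  using adsinner_derivative_eq_0_if_const[of 0 2, OF gram_02, of t] gram_12[of t]
  by (simp add: numeral_eq_Suc)

lemma gram_23: "adsinner (D 2 t) (D 3 t) = 0"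
  using adsinner_derivative_eq_0_if_const[of 2 2, OF proper_time, of t] adsinner_commute[of "D 3 t" "D 2 t"]
  by (simp add: numeral_eq_Suc)

lemma gram_13: "adsinner (D 1 t) (D 3 t) = -4"
  using adsinner_derivative_eq_0_if_const[of 1 2, OF gram_12, of t] proper_time[of t]
  by (simp add: numeral_eq_Suc)

lemma gram_04: "adsinner (D 0 t) (D 4 t) = 4"
  using adsinner_derivative_eq_0_if_const[of 0 3, OF gram_03, of t] gram_13[of t]
  by (simp add: numeral_eq_Suc)

lemma gram_14: "adsinner (D 1 t) (D 4 t) = 0"
  using adsinner_derivative_eq_0_if_const[of 1 3, OF gram_13, of t] gram_23[of t]
  by (simp add: numeral_eq_Suc)

lemma gram_24: "adsinner (D 2 t) (D 4 t) = 16 * \<kappa>"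
  using adsinner_derivative_eq_0_if_const[of 2 3, OF gram_23, of t] const_bending[of t]
  by (simp add: numeral_eq_Suc)

lemma gram_34: "adsinner (D 3 t) (D 4 t) = 0"
  using adsinner_derivative_eq_0_if_const[of 3 3, OF const_bending, of t] adsinner_commute[of "D 4 t" "D 3 t"]
  by (simp add: numeral_eq_Suc)

lemmas gram_off_diagonal =
  gram_01 gram_02 gram_03 gram_04 gram_12 gram_13 gram_14 gram_23 gram_24 gram_34

lemmas gram = gram_00 null proper_time const_bending
  gram_off_diagonal gram_off_diagonal[THEN trans[OF adsinner_commute]]

lemma structure_equation: "D 4 t = (4 * \<kappa>) *\<^sub>R D 2 t - 4 *\<^sub>R D 0 t"
proof -
  define R where "R = D 4 t - (4 * \<kappa>) *\<^sub>R D 2 t + 4 *\<^sub>R D 0 t"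
  have "R = 0"
    by (rule eq_0_if_orthogonal_to_frame[of "D 0 t" "D 1 t" "D 2 t" "D 3 t" "-16 * \<kappa>"])
      (simp_all add: R_def adsinner_distrib gram del: One_nat_def)
  then show ?thesis
    by (simp add: R_def algebra_simps)
qed

lemma cos_mul_period_eq_1:
  assumes freq: "\<alpha>\<^sup>2 + \<beta>\<^sup>2 = -4 * \<kappa>" "\<alpha>\<^sup>2 * \<beta>\<^sup>2 = 4" and "\<beta> \<noteq> 0"
    and periodic: "\<And>t. D 0 (t + T) = D 0 t"
  shows "cos (\<beta> * T) = 1"
proof -
  have eq: "D 4 t = - (\<alpha>\<^sup>2 + \<beta>\<^sup>2) *\<^sub>R D 2 t - (\<alpha>\<^sup>2 * \<beta>\<^sup>2) *\<^sub>R D 0 t" for t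
    using structure_equation freq by simp
  have "D 2 T + \<alpha>\<^sup>2 *\<^sub>R D 0 T = D 2 0 + \<alpha>\<^sup>2 *\<^sub>R D 0 0"
    using derivative_chain_periodic[OF chain periodic, of 2 0]
      derivative_chain_periodic[OF chain periodic, of 0 0] by simp
  then have "adsinner (D 0 0) (D 2 T + \<alpha>\<^sup>2 *\<^sub>R D 0 T) = adsinner (D 0 0) (D 2 0 + \<alpha>\<^sup>2 *\<^sub>R D 0 0)"
    by simp
  then have "cos (\<beta> * T) * \<alpha>\<^sup>2 = \<alpha>\<^sup>2"
    unfolding fourth_order_oscillator_component[OF chain eq \<open>\<beta> \<noteq> 0\<close>, of T]
    by (simp add: adsinner_distrib gram del: One_nat_def)
  moreover have "\<alpha>\<^sup>2 \<noteq> 0"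
    using freq(2) by auto
  ultimately show ?thesis
    by simp
qed

lemma frequency_ratio_Rats_if_closed:
  assumes freq: "\<alpha>\<^sup>2 + \<beta>\<^sup>2 = -4 * \<kappa>" "\<alpha>\<^sup>2 * \<beta>\<^sup>2 = 4"
    and "closed_curve (D 0)"
  shows "\<alpha> / \<beta> \<in> \<rat>"
proof -
  obtain T where "T > 0" and periodic: "\<And>t. D 0 (t + T) = D 0 t"
    using \<open>closed_curve (D 0)\<close> by (auto simp: closed_curve_def)
  have freq': "\<beta>\<^sup>2 + \<alpha>\<^sup>2 = -4 * \<kappa>" "\<beta>\<^sup>2 * \<alpha>\<^sup>2 = 4"
    using freq by (simp_all add: add.commute mult.commute)
  have "\<alpha> \<noteq> 0" "\<beta> \<noteq> 0"
    using freq(2) by auto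
  obtain n :: int where n: "\<alpha> * T = of_int n * 2 * pi"
    using cos_mul_period_eq_1[OF freq' \<open>\<alpha> \<noteq> 0\<close> periodic] by (auto simp: cos_one_2pi_int)
  obtain m :: int where m: "\<beta> * T = of_int m * 2 * pi"
    using cos_mul_period_eq_1[OF freq \<open>\<beta> \<noteq> 0\<close> periodic] by (auto simp: cos_one_2pi_int)
  have "\<alpha> / \<beta> = (\<alpha> * T) / (\<beta> * T)"
    using \<open>T > 0\<close> by simp
  also have "\<dots> = of_int n / of_int m"
    using n m by simp
  finally show ?thesis
    by simp
qed

lemma closed_iff_frequency_ratio_Rats:
  assumes freq: "\<alpha>\<^sup>2 + \<beta>\<^sup>2 = -4 * \<kappa>" "\<alpha>\<^sup>2 * \<beta>\<^sup>2 = 4"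
    and "\<alpha> > 0" "\<beta> > 0" "\<alpha> \<noteq> \<beta>"
  shows "closed_curve (D 0) \<longleftrightarrow> \<alpha> / \<beta> \<in> \<rat>"
proof
  assume "\<alpha> / \<beta> \<in> \<rat>"
  moreover have "D 4 t = - (\<alpha>\<^sup>2 + \<beta>\<^sup>2) *\<^sub>R D 2 t - (\<alpha>\<^sup>2 * \<beta>\<^sup>2) *\<^sub>R D 0 t" for t
    using structure_equation freq by simp
  ultimately show "closed_curve (D 0)"
    unfolding closed_curve_def by (rule fourth_order_oscillator_periodic[OF chain, rotated -1])
      (use assms in auto)
qed (use frequency_ratio_Rats_if_closed freq in blast)

end

lemma sum_diff_ratio_Rats_iff:
  fixes a b :: real
  assumes "0 < b" "b < a"
  shows "(a + b) / (a - b) \<in> \<rat> \<longleftrightarrow> a / b \<in> \<rat>"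
proof -
  define r where "r = a / b"
  define q where "q = (r + 1) / (r - 1)"
  have "r > 1"
    using assms by (simp add: r_def)
  then have "(a + b) / (a - b) = q" "r = (q + 1) / (q - 1)"
    using assms by (simp_all add: r_def q_def field_simps)
  then show ?thesis
    unfolding r_def[symmetric] q_def by (metis Rats_1 Rats_add Rats_diff Rats_divide)
qed

lemma bending_eq_iff_sqrt_ratio:
  fixes \<kappa> :: real and m n :: nat
  assumes "\<kappa> < -1" "n > 0"
  shows "\<kappa> = - (real m ^ 2 + real n ^ 2) / (real m ^ 2 - real n ^ 2) \<longleftrightarrow>
    sqrt (1 - \<kappa>) / sqrt (-1 - \<kappa>) = real m / real n"
proof -
  define a b where "a = sqrt (1 - \<kappa>)" and "b = sqrt (-1 - \<kappa>)"
  define M N where "M = real m ^ 2" and "N = real n ^ 2"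
  have "a > 0" "b > 0" "a\<^sup>2 = 1 - \<kappa>" "b\<^sup>2 = -1 - \<kappa>"
    using assms by (simp_all add: a_def b_def)
  have "N > 0"
    using assms by (simp add: N_def)
  have "a / b = real m / real n \<longleftrightarrow> a * real n = b * real m"
    using \<open>b > 0\<close> assms by (simp add: field_simps)
  also have "\<dots> \<longleftrightarrow> (a * real n)\<^sup>2 = (b * real m)\<^sup>2"
    using \<open>a > 0\<close> \<open>b > 0\<close> by (simp add: power2_eq_iff_nonneg)
  also have "\<dots> \<longleftrightarrow> (1 - \<kappa>) * N = (-1 - \<kappa>) * M"
    by (simp add: power_mult_distrib M_def N_def \<open>a\<^sup>2 = 1 - \<kappa>\<close> \<open>b\<^sup>2 = -1 - \<kappa>\<close>)
  also have "\<dots> \<longleftrightarrow> \<kappa> * (M - N) = - (M + N)"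
    by (auto simp: algebra_simps)
  also have "\<dots> \<longleftrightarrow> \<kappa> = - (M + N) / (M - N)"
    using \<open>N > 0\<close> assms(1) by (cases "M = N") (auto simp: eq_divide_eq)
  finally show ?thesis
    by (simp add: a_def b_def M_def N_def)
qed

lemma sqrt_ratio_Rats_iff:
  fixes \<kappa> :: real
  assumes "\<kappa> < -1"
  shows "sqrt (1 - \<kappa>) / sqrt (-1 - \<kappa>) \<in> \<rat> \<longleftrightarrow>
    (\<exists>m n :: nat. coprime m n \<and> n < m \<and> \<kappa> = - (real m ^ 2 + real n ^ 2) / (real m ^ 2 - real n ^ 2))"
    (is "?r \<in> \<rat> \<longleftrightarrow> (\<exists>m n. ?P m n)")
proof
  assume "?r \<in> \<rat>"
  have "?r > 1"
    using assms by (simp add: real_sqrt_less_mono)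
  obtain p q :: int where q: "q > 0" "coprime p q" and r: "?r = of_int p / of_int q"
    using \<open>?r \<in> \<rat>\<close> by (auto elim!: Rats_cases')
  have "p > q"
    using \<open>?r > 1\<close> q by (simp add: r)
  define m n where "m = nat p" and "n = nat q"
  have "p = int m" "q = int n"
    using q \<open>p > q\<close> by (simp_all add: m_def n_def)
  then have "?P m n"
    using q \<open>p > q\<close> r bending_eq_iff_sqrt_ratio[OF assms, of n m] by simp
  then show "\<exists>m n. ?P m n"
    by blast
next
  assume "\<exists>m n. ?P m n"
  then obtain m n where "n < m" and \<kappa>: "\<kappa> = - (real m ^ 2 + real n ^ 2) / (real m ^ 2 - real n ^ 2)"
    by blast
  have "n > 0"
    using assms \<open>n < m\<close> \<kappa> by (cases "n = 0") auto
  then have "?r = real m / real n"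
    using bending_eq_iff_sqrt_ratio[OF assms] \<kappa> by blast
  then show "?r \<in> \<rat>"
    by simp
qed

theorem mainTheorem8:
  fixes \<gamma> :: "real \<Rightarrow> real^2^2" and D :: "nat \<Rightarrow> real \<Rightarrow> real^2^2" and \<kappa> :: real
  assumes "null_curve \<gamma> D"
    and "\<forall>t. bending D t = \<kappa>"
    and "\<kappa> < -1"
  shows "(closed_curve \<gamma> \<longleftrightarrow> rho_plus \<kappa> / rho_minus \<kappa> \<in> \<rat>) \<and>
         (closed_curve \<gamma> \<longleftrightarrow>
            (\<exists>m n :: nat. coprime m n \<and> n < m \<and>
               \<kappa> = - (real m ^ 2 + real n ^ 2) / (real m ^ 2 - real n ^ 2)))"
proof -
  interpret null_curve_const_bending D \<kappa>
    using assms(1,2) by unfold_locales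
      (auto simp: null_curve_def derivative_chain_def in_AdS_def bending_def)
  define a b where "a = sqrt (1 - \<kappa>)" and "b = sqrt (-1 - \<kappa>)"
  have "0 < b" "b < a" "a\<^sup>2 = 1 - \<kappa>" "b\<^sup>2 = -1 - \<kappa>"
    using assms(3) by (simp_all add: a_def b_def real_sqrt_less_mono)
  then have "(a + b)\<^sup>2 + (a - b)\<^sup>2 = -4 * \<kappa>" "(a + b) * (a - b) = 2"
    by (simp_all add: power2_sum power2_diff algebra_simps flip: power2_eq_square)
  then have "(a + b)\<^sup>2 + (a - b)\<^sup>2 = -4 * \<kappa>" "(a + b)\<^sup>2 * (a - b)\<^sup>2 = 4"
    by (simp_all flip: power_mult_distrib)
  then have "closed_curve \<gamma> \<longleftrightarrow> a / b \<in> \<rat>"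
    using closed_iff_frequency_ratio_Rats[of "a + b" "a - b"] sum_diff_ratio_Rats_iff
      \<open>0 < b\<close> \<open>b < a\<close> assms(1) by (simp add: null_curve_def)
  moreover have "rho_plus \<kappa> / rho_minus \<kappa> = a / b"
    using assms(3) by (simp add: rho_plus_def rho_minus_def a_def b_def)
  ultimately show ?thesis
    using sqrt_ratio_Rats_iff[OF assms(3)] by (simp add: a_def b_def)
qed

end
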